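(* Let $(X,d)$ be a metric space and let $T:X\to X$ be a CJMP-contraction. Let $\varepsilon>0$ and let $\delta=\delta(\varepsilon)>0$ be such that for all $x,y\in X$, $\varepsilon<d(x,y)<\varepsilon+\delta$ implies $d(Tx,Ty)\le\varepsilon$. If $x,y,z\in X$ satisfy $d(x,y)<\delta$ and $d(y,z)\le\varepsilon$, then $d(Tx,Tz)\le\varepsilon$.
   Context: A map $T:X\to X$ on a metric space $(X,d)$ is contractive if $d(Tx,Ty)<d(x,y)$ for all $x,y\in X$ with $x\neq y$. $T$ is a CJMP-contraction if (a) $T$ is contractive, and (b) for every $\varepsilon>0$ there exists $\delta=\delta(\varepsilon)>0$ such that for all $x,y\in X$, $\varepsilon<d(x,y)<\varepsilon+\delta$ implies $d(Tx,Ty)\le\varepsilon$. *)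

theory Defs
  imports "HOL-Analysis.Analysis"
begin

definition contractive :: "('a::metric_space \<Rightarrow> 'a) \<Rightarrow> bool" where
  "contractive T \<longleftrightarrow> (\<forall>x y. x \<noteq> y \<longrightarrow> dist (T x) (T y) < dist x y)"

definition CJMP_contraction :: "('a::metric_space \<Rightarrow> 'a) \<Rightarrow> bool" where
  "CJMP_contraction T \<longleftrightarrow> contractive T \<and>
     (\<forall>\<epsilon>>0. \<exists>\<delta>>0. \<forall>x y. \<epsilon> < dist x y \<and> dist x y < \<epsilon> + \<delta> \<longrightarrow> dist (T x) (T y) \<le> \<epsilon>)"

end

theory Submission
  imports Defs
begin

lemma contractive_imp_dist_le:
  assumes "contractive T"
  shows "dist (T x) (T y) \<le> dist x y"
  using assms by (cases "x = y") (auto simp: contractive_def less_imp_le)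

lemma CJMP_contraction_imp_contractive: "CJMP_contraction T \<Longrightarrow> contractive T"
  by (simp add: CJMP_contraction_def)

theorem mainTheorem1:
  fixes T :: "'a::metric_space \<Rightarrow> 'a" and \<epsilon> \<delta> :: real and x y z :: 'a
  assumes "CJMP_contraction T"
    and "\<epsilon> > 0" and "\<delta> > 0"
    and "\<forall>u v. \<epsilon> < dist u v \<and> dist u v < \<epsilon> + \<delta> \<longrightarrow> dist (T u) (T v) \<le> \<epsilon>"
    and "dist x y < \<delta>" and "dist y z \<le> \<epsilon>"
  shows "dist (T x) (T z) \<le> \<epsilon>"
proof (cases "\<epsilon> < dist x z")
  case True
  have "dist x z < \<epsilon> + \<delta>"
    using dist_triangle[of x z y] assms(5,6) by linarith
  with True assms(4) show ?thesis by blast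
next
  case False
  have "dist (T x) (T z) \<le> dist x z"
    using assms(1) by (intro contractive_imp_dist_le CJMP_contraction_imp_contractive)
  with False show ?thesis by linarith
qed

end
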